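(* Let $K:\mathbb B_d\times\mathbb B_d\to\mathcal M_d(\mathbb C)$ be a sesqui-analytic Hermitian function which is quasi-invariant with multiplier $c(u)=u$, i.e. $$u\,K(u^{-1}\cdot\boldsymbol z,u^{-1}\cdot\boldsymbol w)\,u^*=K(\boldsymbol z,\boldsymbol w)\quad\text{for all }u\in\mathcal U(d),\ \boldsymbol z,\boldsymbol w\in\mathbb B_d.$$ Then there are complex numbers $\alpha_j$ ($j\geq0$) and $\beta_j$ ($j\geq1$) such that $$K(\boldsymbol z,\boldsymbol w)=\sum_{j=0}^\infty\alpha_j\hat K_j(\boldsymbol z,\boldsymbol w)+\sum_{j=1}^\infty\beta_j\hat K_j^\perp(\boldsymbol z,\boldsymbol w).$$
   Context: $\mathbb B_d$ is the open unit ball of $\mathbb C^d$, $\mathcal U(d)$ the unitary group, $\langle\boldsymbol z,\boldsymbol w\rangle=\sum_i z_i\bar w_i$. Sesqui-analytic means holomorphic in $\boldsymbol z$ and anti-holomorphic in $\boldsymbol w$; Hermitian means $K(\boldsymbol z,\boldsymbol w)^*=K(\boldsymbol w,\boldsymbol z)$. $\mathcal P_\ell$ denotes homogeneous polynomials of degree $\ell$ in $d$ variables with the Fischer–Fock inner product ($\langle\boldsymbol z^\alpha,\boldsymbol z^\beta\rangle=\alpha!\,\delta_{\alpha\beta}$), and $\mathbb C^d\otimes\mathcal P_\ell$ carries the tensor product inner product. Let $\hat{\mathcal V}_\ell=\{f=(f_1,\ldots,f_d)\in\mathbb C^d\otimes\mathcal P_\ell:\partial_1f_1+\cdots+\partial_df_d=0\}$,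 $\hat K_\ell$ its reproducing kernel and $\hat K_\ell^\perp$ the reproducing kernel of its orthogonal complement in $\mathbb C^d\otimes\mathcal P_\ell$. Explicitly $\hat K_0=I_d$, and for $\ell\ge1$, $\hat K_\ell(\boldsymbol z,\boldsymbol w)=\frac{1}{(\ell+d-1)(\ell-1)!}\langle\boldsymbol z,\boldsymbol w\rangle^{\ell-1}\big(\frac{\ell+d-1}{\ell}\langle\boldsymbol z,\boldsymbol w\rangle I_d-\boldsymbol z\bar{\boldsymbol w}^\dagger\big)$ and $\hat K_\ell^\perp(\boldsymbol z,\boldsymbol w)=\frac{1}{(\ell+d-1)(\ell-1)!}\langle\boldsymbol z,\boldsymbol w\rangle^{\ell-1}\boldsymbol z\bar{\boldsymbol w}^\dagger$, where $\boldsymbol z\bar{\boldsymbol w}^\dagger$ is the matrix with $(i,j)$ entry $z_i\bar w_j$. *)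

theory Defs
  imports "HOL-Analysis.Analysis"
begin

text \<open>Vectors in C^d are complex ^ 'd, d = CARD('d); d x d matrices are complex ^ 'd ^ 'd.\<close>

definition cinner :: "complex ^ 'd \<Rightarrow> complex ^ 'd \<Rightarrow> complex" where
  "cinner z w = (\<Sum>i\<in>UNIV. z $ i * cnj (w $ i))"

definition cadj :: "complex ^ 'd ^ 'd \<Rightarrow> complex ^ 'd ^ 'd" where
  "cadj U = (\<chi> i j. cnj (U $ j $ i))"

definition unitary_mat :: "complex ^ 'd ^ 'd \<Rightarrow> bool" where
  "unitary_mat U \<longleftrightarrow> U ** cadj U = mat 1 \<and> cadj U ** U = mat 1"

definition cscale :: "complex \<Rightarrow> complex ^ 'd ^ 'd \<Rightarrow> complex ^ 'd ^ 'd" where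
  "cscale a M = (\<chi> i j. a * M $ i $ j)"

definition outer :: "complex ^ 'd \<Rightarrow> complex ^ 'd \<Rightarrow> complex ^ 'd ^ 'd" where
  "outer z w = (\<chi> i j. z $ i * cnj (w $ j))"

definition holo_on :: "(complex ^ 'd) set \<Rightarrow> (complex ^ 'd \<Rightarrow> complex) \<Rightarrow> bool" where
  "holo_on S f \<longleftrightarrow> (\<forall>z\<in>S. \<exists>f'. (f has_derivative f') (at z) \<and> (\<forall>c v. f' (c *s v) = c * f' v))"

definition sesqui_analytic :: "(complex ^ 'd \<Rightarrow> complex ^ 'd \<Rightarrow> complex ^ 'd ^ 'd) \<Rightarrow> bool" where
  "sesqui_analytic K \<longleftrightarrow>
     (\<forall>w\<in>ball 0 1. \<forall>i j. holo_on (ball 0 1) (\<lambda>z. K z w $ i $ j)) \<and>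
     (\<forall>z\<in>ball 0 1. \<forall>i j. holo_on (ball 0 1) (\<lambda>w. cnj (K z w $ i $ j)))"

definition hermitian_kernel :: "(complex ^ 'd \<Rightarrow> complex ^ 'd \<Rightarrow> complex ^ 'd ^ 'd) \<Rightarrow> bool" where
  "hermitian_kernel K \<longleftrightarrow> (\<forall>z\<in>ball 0 1. \<forall>w\<in>ball 0 1. cadj (K z w) = K w z)"

definition quasi_invariant_id :: "(complex ^ 'd \<Rightarrow> complex ^ 'd \<Rightarrow> complex ^ 'd ^ 'd) \<Rightarrow> bool" where
  "quasi_invariant_id K \<longleftrightarrow> (\<forall>U z w. unitary_mat U \<longrightarrow> z \<in> ball 0 1 \<longrightarrow> w \<in> ball 0 1 \<longrightarrow>
      U ** K (cadj U *v z) (cadj U *v w) ** cadj U = K z w)"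

definition Khat :: "nat \<Rightarrow> complex ^ 'd \<Rightarrow> complex ^ 'd \<Rightarrow> complex ^ 'd ^ 'd" where
  "Khat l z w = (if l = 0 then mat 1 else
     cscale (cinner z w ^ (l - 1) / (of_nat (l + CARD('d) - 1) * of_nat (fact (l - 1))))
       (cscale (of_nat (l + CARD('d) - 1) / of_nat l * cinner z w) (mat 1) - outer z w))"

definition Kperp :: "nat \<Rightarrow> complex ^ 'd \<Rightarrow> complex ^ 'd \<Rightarrow> complex ^ 'd ^ 'd" where
  "Kperp l z w =
     cscale (cinner z w ^ (l - 1) / (of_nat (l + CARD('d) - 1) * of_nat (fact (l - 1)))) (outer z w)"

end

theory Submission
  imports Defs "HOL-Complex_Analysis.Complex_Analysis"
begin

text \<open>
  The quasi-invariance says that \<open>K z w\<close> intertwines every unitary \<open>U\<close> fixing \<open>z\<close> and \<open>w\<close>.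
  Taking for \<open>U\<close> the phase rotations along a unit vector \<open>v \<bottom> w\<close> and moving \<open>z\<close> along the
  line \<open>z + t v\<close>, the entries of \<open>K\<close> become holomorphic functions of \<open>t\<close> with prescribed
  behaviour under \<open>t \<mapsto> \<omega> t\<close>: those of weight zero are constant, those of weight \<open>-1\<close>
  vanish. Hence every vector orthogonal to \<open>w\<close> is an eigenvector of \<open>K z w\<close>, and by the
  Hermitian symmetry every row orthogonal to \<open>z\<close> is a left eigenvector. For \<open>w\<close> on a
  coordinate axis this leaves only \<open>K z w = f \<langle>z, w\<rangle> I + g \<langle>z, w\<rangle> z w\<^sup>*\<close> with \<open>f\<close>, \<open>g\<close>
  holomorphic on the unit disc, and unitary invariance carries the formula to all \<open>w\<close>.
  Expanding \<open>f\<close> and \<open>g\<close> in power series and using \<open>Khat l + Kperp l = \<langle>z, w\<rangle>\<^sup>l / l! I\<close>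
  regroups the result into the two series of the theorem.
\<close>

section \<open>The Hermitian inner product\<close>

lemma cinner_add_left: "cinner (x + y) u = cinner x u + cinner y u"
  by (simp add: cinner_def distrib_right sum.distrib)

lemma cinner_add_right: "cinner u (x + y) = cinner u x + cinner u y"
  by (simp add: cinner_def distrib_left sum.distrib)

lemma cinner_diff_left: "cinner (x - y) u = cinner x u - cinner y u"
  by (simp add: cinner_def left_diff_distrib sum_subtractf)

lemma cinner_diff_right: "cinner u (x - y) = cinner u x - cinner u y"
  by (simp add: cinner_def right_diff_distrib sum_subtractf)

lemma cinner_smult_left: "cinner (c *s x) u = c * cinner x u"
  by (simp add: cinner_def sum_distrib_left mult.assoc)

lemma cinner_smult_right: "cinner u (c *s x) = cnj c * cinner u x"
  by (simp add: cinner_def sum_distrib_left algebra_simps)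

lemma cinner_zero_left [simp]: "cinner 0 u = 0"
  by (simp add: cinner_def)

lemma cinner_zero_right [simp]: "cinner u 0 = 0"
  by (simp add: cinner_def)

lemmas cinner_simps =
  cinner_add_left cinner_add_right cinner_diff_left cinner_diff_right
  cinner_smult_left cinner_smult_right

lemma cinner_commute: "cinner y x = cnj (cinner x y)"
  by (simp add: cinner_def mult.commute)

lemma cinner_eq_0_commute: "cinner x y = 0 \<longleftrightarrow> cinner y x = 0"
  by (metis cinner_commute complex_cnj_zero_iff)

lemma cinner_axis_right: "cinner x (axis i 1) = x $ i"
  by (simp add: cinner_def axis_def if_distrib cong: if_cong)

lemma cinner_axis_left: "cinner (axis i 1) x = cnj (x $ i)"
  by (metis cinner_axis_right cinner_commute)

lemma Re_cinner: "Re (cinner z w) = inner z w"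
  by (simp add: cinner_def inner_vec_def inner_complex_def)

lemma cinner_self: "cinner x x = of_real ((norm x)\<^sup>2)"
proof -
  have "x $ i * cnj (x $ i) = of_real ((cmod (x $ i))\<^sup>2)" for i
    by (rule complex_norm_square[symmetric])
  then show ?thesis
    by (simp add: cinner_def norm_vec_def L2_set_def sum_nonneg)
qed

lemma cinner_self_eq_0 [simp]: "cinner x x = 0 \<longleftrightarrow> x = 0"
  by (simp add: cinner_self)

lemma norm_smult_vec: "norm (c *s (x::complex^'d)) = cmod c * norm x"
proof -
  have "(norm (c *s x))\<^sup>2 = (cmod c * norm x)\<^sup>2"
    by (simp add: norm_vec_def L2_set_def sum_nonneg power_mult_distrib norm_mult sum_distrib_left)
  then show ?thesis
    by (simp add: power2_eq_iff_nonneg)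
qed

lemma norm_smult_axis: "norm (c *s axis i 1 :: complex^'d) = cmod c"
proof -
  have "cinner (axis i 1) (axis i 1 :: complex^'d) = 1"
    by (simp add: cinner_axis_right)
  then have "norm (axis i 1 :: complex^'d) = 1"
    by (simp add: cinner_self power2_eq_iff_nonneg)
  then show ?thesis
    by (simp add: norm_smult_vec)
qed

lemma cinner_Cauchy_Schwarz: "cmod (cinner z w) \<le> norm z * norm (w::complex^'d)"
proof (cases "cinner z w = 0")
  case False
  define \<omega> where "\<omega> = cnj (cinner z w) / cmod (cinner z w)"
  have "cnj (cinner z w) * cinner z w = of_real (cmod (cinner z w) * cmod (cinner z w))"
    by (metis complex_norm_square mult.commute of_real_mult power2_eq_square)
  then have "cmod (cinner z w) = Re (cinner (\<omega> *s z) w)"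
    using False by (simp add: \<omega>_def cinner_smult_left)
  also have "\<dots> \<le> norm (\<omega> *s z) * norm w"
    unfolding Re_cinner by (rule norm_cauchy_schwarz)
  also have "\<dots> = norm z * norm w"
    using False by (simp add: \<omega>_def norm_smult_vec norm_divide)
  finally show ?thesis .
qed simp

lemma cinner_in_unit_disc:
  assumes "z \<in> ball 0 1" "w \<in> ball 0 1"
  shows "cmod (cinner z w) < 1"
proof -
  have "norm z * norm w < 1 * 1"
    using assms by (intro mult_strict_mono') auto
  then show ?thesis
    using cinner_Cauchy_Schwarz[of z w] by simp
qed

lemma unit_vector_multiple:
  assumes "q \<noteq> (0::complex^'d)"
  obtains v n where "0 < n" "cinner v v = 1" "q = of_real n *s v"
proof
  show "0 < norm q" and "q = of_real (norm q) *s (of_real (1 / norm q) *s q)"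
    using assms by (simp_all add: vector_smult_assoc)
  show "cinner (of_real (1 / norm q) *s q) (of_real (1 / norm q) *s q) = 1"
    using assms by (simp add: cinner_smult_left cinner_smult_right cinner_self norm_smult_vec norm_divide)
qed

lemma norm_add_orthogonal_sq:
  assumes "cinner z v = 0" "cinner v v = 1"
  shows "(norm (z + t *s v))\<^sup>2 = (norm z)\<^sup>2 + (cmod t)\<^sup>2"
proof -
  have "cinner (z + t *s v) (z + t *s v) = cinner z z + t * cnj t"
    using assms cinner_eq_0_commute[of z v] by (simp add: cinner_simps)
  then have "Re (cinner (z + t *s v) (z + t *s v)) = Re (cinner z z) + (cmod t)\<^sup>2"
    by (simp add: cmod_power2 flip: power2_eq_square)
  then show ?thesis
    by (simp add: Re_cinner power2_norm_eq_inner)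
qed

lemma orthogonal_line_in_ball_iff:
  assumes "cinner z v = 0" "cinner v v = 1" "z \<in> ball 0 1"
  shows "z + t *s v \<in> ball 0 1 \<longleftrightarrow> t \<in> ball 0 (sqrt (1 - (norm z)\<^sup>2))"
proof -
  have "z + t *s v \<in> ball 0 1 \<longleftrightarrow> (norm (z + t *s v))\<^sup>2 < 1"
    by (simp add: abs_square_less_1)
  also have "\<dots> \<longleftrightarrow> (cmod t)\<^sup>2 < 1 - (norm z)\<^sup>2"
    by (simp add: norm_add_orthogonal_sq[OF assms(1,2)] algebra_simps)
  also have "\<dots> \<longleftrightarrow> sqrt ((cmod t)\<^sup>2) < sqrt (1 - (norm z)\<^sup>2)"
    by (rule real_sqrt_less_iff[symmetric])
  finally show ?thesis
    by simp
qed

lemma orthogonal_projection_in_ball: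
  assumes "cinner v v = 1" "z \<in> ball 0 1"
  shows "z - cinner z v *s v \<in> ball 0 1"
proof -
  have "cinner (z - cinner z v *s v) v = 0"
    using assms(1) by (simp add: cinner_simps)
  from norm_add_orthogonal_sq[OF this assms(1), of "cinner z v"]
  have "(norm (z - cinner z v *s v))\<^sup>2 \<le> (norm z)\<^sup>2"
    by simp
  then show ?thesis
    using assms(2) by (simp add: power2_le_iff_abs_le)
qed

lemma orthogonal_to_orthogonal_complement:
  assumes "z \<noteq> 0" "\<And>u. cinner z u = 0 \<Longrightarrow> cinner r u = 0"
  shows "r = (cinner r z / cinner z z) *s z"
proof -
  define u where "u = r - (cinner r z / cinner z z) *s z"
  have "cinner u z = 0"
    using assms(1) by (simp add: u_def cinner_simps)
  then have "cinner u u = cinner r u"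
    using cinner_eq_0_commute[of u z] by (simp add: u_def cinner_simps)
  also have "\<dots> = 0"
    using assms(2) \<open>cinner u z = 0\<close> cinner_eq_0_commute by blast
  finally show ?thesis
    by (simp add: u_def)
qed

lemma axis_orthogonal_decomposition:
  fixes z :: "complex^'d"
  obtains "z = z $ i *s axis i 1"
  | v t where "cinner v v = 1" "cinner v (axis i 1) = 0" "z = z $ i *s axis i 1 + t *s v"
proof (cases "z = z $ i *s axis i 1")
  case False
  then have "z - z $ i *s axis i 1 \<noteq> 0"
    by simp
  then obtain v n where "0 < n" "cinner v v = 1" and v: "z - z $ i *s axis i 1 = of_real n *s v"
    by (rule unit_vector_multiple)
  moreover have "cinner (z - z $ i *s axis i 1) (axis i 1) = 0"
    by (simp add: cinner_simps cinner_axis_right)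
  ultimately have "cinner v (axis i 1) = 0"
    by (simp add: cinner_smult_left)
  moreover have "z = z $ i *s axis i 1 + of_real n *s v"
    by (simp flip: v)
  ultimately show ?thesis
    using that(2) \<open>cinner v v = 1\<close> by blast
qed simp

lemma exists_other_index: "\<exists>i::'d. i \<noteq> i0 \<or> CARD('d) = 1"
proof (cases "CARD('d) = 1")
  case False
  then have "UNIV \<noteq> {i0}"
    using card_1_singleton_iff[of "UNIV :: 'd set"] by auto
  then show ?thesis
    by auto
qed simp

section \<open>Matrices and unitaries\<close>

lemma cscale_mult_vec: "cscale a M *v x = a *s (M *v x)"
  by (simp add: cscale_def matrix_vector_mult_def vec_eq_iff sum_distrib_left mult.assoc)

lemma outer_mult_vec: "outer z w *v x = cinner x w *s z"
  by (simp add: outer_def matrix_vector_mult_def vec_eq_iff cinner_def sum_distrib_left algebra_simps)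

lemma mult_vec_axis_nth: "(M *v axis j 1) $ i = (M::complex^'d^'d) $ i $ j"
  by (simp add: matrix_vector_mult_def axis_def if_distrib cong: if_cong)

lemma cinner_mult_vec_adjoint: "cinner (M *v x) y = cinner x (cadj M *v y)"
  unfolding cinner_def cadj_def matrix_vector_mult_def
  by (simp add: sum_distrib_left sum_distrib_right mult_ac cnj_sum) (rule sum.swap)

lemma cscale_diff_right: "cscale a (A - B) = cscale a A - cscale a B"
  by (simp add: cscale_def vec_eq_iff algebra_simps)

lemma cscale_add_left: "cscale (a + b) A = cscale a A + cscale b A"
  by (simp add: cscale_def vec_eq_iff algebra_simps)

lemma cscale_cscale: "cscale a (cscale b A) = cscale (a * b) A"
  by (simp add: cscale_def vec_eq_iff)

lemma cscale_zero_left [simp]: "cscale 0 A = 0"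
  by (simp add: cscale_def vec_eq_iff)

lemma norm_cscale: "norm (cscale a (A::complex^'d^'d)) = cmod a * norm A"
proof -
  have "cscale a A $ i = a *s A $ i" for i
    by (simp add: cscale_def vec_eq_iff)
  then have "norm (cscale a A) = L2_set (\<lambda>i. cmod a * norm (A $ i)) UNIV"
    by (simp add: norm_vec_def[of "cscale a A"] norm_smult_vec)
  then show ?thesis
    by (simp add: L2_set_right_distrib norm_vec_def)
qed

lemma bounded_linear_cscale_left: "bounded_linear (\<lambda>a. cscale a (A::complex^'d^'d))"
proof (rule bounded_linear_intro[where K = "norm A"])
  show "cscale (a + b) A = cscale a A + cscale b A" for a b
    by (rule cscale_add_left)
  show "cscale (r *\<^sub>R a) A = r *\<^sub>R cscale a A" for r a
    by (simp add: cscale_def vec_eq_iff)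
  show "norm (cscale a A) \<le> norm a * norm A" for a
    by (simp add: norm_cscale)
qed

lemma sums_cscale_left:
  "summable a \<Longrightarrow> (\<lambda>n. cscale (a n) (A::complex^'d^'d)) sums cscale (suminf a) A"
  by (rule bounded_linear.sums[OF bounded_linear_cscale_left summable_sums])

lemma unitary_matI:
  assumes "\<And>x. U *v (cadj U *v x) = x" "\<And>x. cadj U *v (U *v x) = x"
  shows "unitary_mat (U::complex^'d^'d)"
  using assms by (simp add: unitary_mat_def matrix_eq flip: matrix_vector_mul_assoc)

lemma unitary_matD:
  assumes "unitary_mat (U::complex^'d^'d)"
  shows "U *v (cadj U *v x) = x" "cadj U *v (U *v x) = x"
  using assms by (simp_all add: unitary_mat_def matrix_vector_mul_assoc)

lemma cinner_unitary_adj: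
  assumes "unitary_mat (U::complex^'d^'d)"
  shows "cinner (cadj U *v x) (cadj U *v y) = cinner x y"
  by (metis cinner_mult_vec_adjoint unitary_matD(1)[OF assms])

lemma norm_unitary_adj:
  assumes "unitary_mat (U::complex^'d^'d)"
  shows "norm (cadj U *v z) = norm z"
proof -
  have "(norm (cadj U *v z))\<^sup>2 = (norm z)\<^sup>2"
    using cinner_unitary_adj[OF assms, of z z] unfolding cinner_self of_real_eq_iff .
  then show ?thesis
    by (simp add: power2_eq_iff_nonneg)
qed

lemma cnj_mult_unimodular: "cmod \<omega> = 1 \<Longrightarrow> cnj \<omega> * \<omega> = 1"
  by (metis complex_norm_square mult.commute of_real_1 power_one)

lemma unitary_scalar_mat:
  assumes "cmod \<omega> = 1"
  shows "unitary_mat (cscale \<omega> (mat 1) :: complex^'d^'d)"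
    and "cadj (cscale \<omega> (mat 1)) = cscale (cnj \<omega>) (mat 1 :: complex^'d^'d)"
proof -
  show adj: "cadj (cscale \<omega> (mat 1)) = cscale (cnj \<omega>) (mat 1 :: complex^'d^'d)"
    by (simp add: cadj_def cscale_def mat_def vec_eq_iff)
  show "unitary_mat (cscale \<omega> (mat 1) :: complex^'d^'d)"
    using cnj_mult_unimodular[OF assms]
    by (intro unitary_matI) (simp_all add: adj cscale_mult_vec vector_smult_assoc mult.commute)
qed

definition phase_along :: "complex \<Rightarrow> complex^'d \<Rightarrow> complex^'d^'d" where
  "phase_along \<omega> v = mat 1 + cscale (\<omega> - 1) (outer v v)"

lemma phase_along_mult_vec: "phase_along \<omega> v *v x = x + ((\<omega> - 1) * cinner x v) *s v"
  by (simp add: phase_along_def matrix_vector_mult_add_rdistrib cscale_mult_vec outer_mult_vec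
      vector_smult_assoc)

lemma cadj_phase_along: "cadj (phase_along \<omega> v) = phase_along (cnj \<omega>) v"
  by (simp add: phase_along_def cadj_def cscale_def outer_def mat_def vec_eq_iff)

lemma phase_along_orthogonal: "cinner x v = 0 \<Longrightarrow> phase_along \<omega> v *v x = x"
  by (simp add: phase_along_mult_vec)

lemma phase_along_self: "cinner v v = 1 \<Longrightarrow> phase_along \<omega> v *v v = \<omega> *s v"
  by (simp add: phase_along_mult_vec vector_sadd_rdistrib)

lemma phase_along_mult_vec_cnj:
  assumes "cmod \<omega> = 1" "cinner v v = 1"
  shows "phase_along \<omega> v *v (phase_along (cnj \<omega>) v *v x) = x"
proof -
  have "phase_along \<omega> v *v (phase_along (cnj \<omega>) v *v x) = x + ((\<omega> * cnj \<omega> - 1) * cinner x v) *s v"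
    using assms(2) by (simp add: phase_along_mult_vec vec_eq_iff cinner_simps algebra_simps)
  then show ?thesis
    using cnj_mult_unimodular[OF assms(1)] by (simp add: mult.commute)
qed

lemma unitary_phase_along:
  assumes "cmod \<omega> = 1" "cinner v v = 1"
  shows "unitary_mat (phase_along \<omega> v)"
proof (rule unitary_matI)
  show "phase_along \<omega> v *v (cadj (phase_along \<omega> v) *v x) = x" for x
    using phase_along_mult_vec_cnj[OF assms] by (simp add: cadj_phase_along)
  show "cadj (phase_along \<omega> v) *v (phase_along \<omega> v *v x) = x" for x
    using phase_along_mult_vec_cnj[of "cnj \<omega>" v] assms by (simp add: cadj_phase_along)
qed

lemma mat_nth_eq_cinner: "(M::complex^'d^'d) $ i $ j = cinner (M *v axis j 1) (axis i 1)"
  by (simp add: cinner_axis_right mult_vec_axis_nth)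

lemma common_eigenvalue_axis:
  fixes M :: "complex^'d^'d"
  assumes add_closed: "\<And>x y. P x \<Longrightarrow> P y \<Longrightarrow> P (x + y)"
    and eigen: "\<And>x. P x \<Longrightarrow> \<exists>c. M *v x = c *s x"
    and "P (axis j 1)" "P x"
  shows "M *v x = (M $ j $ j) *s x"
proof -
  define x0 c0 where "x0 = axis j (1::complex)" and "c0 = M $ j $ j"
  have "P x0"
    using \<open>P (axis j 1)\<close> by (simp add: x0_def)
  then obtain c where c: "M *v x0 = c *s x0"
    using eigen by blast
  moreover have "c = c0"
    using arg_cong[OF c, where f = "\<lambda>x. x $ j"] by (simp add: x0_def c0_def mult_vec_axis_nth)
  ultimately have "M *v x0 = c0 *s x0"
    by simp
  obtain l where l: "M *v x = l *s x"
    using eigen \<open>P x\<close> by blast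
  obtain m where m: "M *v (x + x0) = m *s (x + x0)"
    using eigen add_closed \<open>P x\<close> \<open>P x0\<close> by blast
  have lin_dep: "(l - m) *s x = (m - c0) *s x0"
    using m l \<open>M *v x0 = c0 *s x0\<close> by (simp add: matrix_vector_right_distrib vec_eq_iff algebra_simps)
  show ?thesis
  proof (cases "l = m")
    case True
    then show ?thesis
      using lin_dep l by (simp add: x0_def c0_def)
  next
    case False
    then have "x = ((m - c0) / (l - m)) *s x0"
      using lin_dep by (simp add: vec_eq_iff field_simps)
    then show ?thesis
      using \<open>M *v x0 = c0 *s x0\<close>
      by (simp add: vector_scalar_commute vector_smult_assoc mult.commute c0_def)
  qed
qed

lemma cadj_matrix_mult: "cadj (A ** B) = cadj B ** cadj (A::complex^'d^'d)"
  by (simp add: cadj_def matrix_matrix_mult_def vec_eq_iff cnj_sum mult.commute)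

lemma unitary_mat_mult:
  assumes "unitary_mat A" "unitary_mat (B::complex^'d^'d)"
  shows "unitary_mat (A ** B)"
  using unitary_matD[OF assms(1)] unitary_matD[OF assms(2)]
  by (intro unitary_matI) (simp_all add: cadj_matrix_mult flip: matrix_vector_mul_assoc)

lemma cadj_mat_1: "cadj (mat 1) = (mat 1 :: complex^'d^'d)"
  by (auto simp: cadj_def mat_def vec_eq_iff)

lemma unitary_mat_1: "unitary_mat (mat 1 :: complex^'d^'d)"
  by (simp add: unitary_mat_def cadj_mat_1)

text \<open>The unitary is the Householder reflection in \<open>x - y\<close>.\<close>

lemma exists_unitary_adj_exchange:
  assumes "cinner x x = cinner y y" "cinner y x = cinner x (y::complex^'d)"
  obtains U where "unitary_mat U" "cadj U *v x = y"
proof (cases "x = y")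
  case True
  then show ?thesis
    using that[OF unitary_mat_1] by (simp add: cadj_mat_1)
next
  case False
  then have "x - y \<noteq> 0"
    by simp
  then obtain v n where "0 < n" "cinner v v = 1" and v: "x - y = of_real n *s v"
    by (rule unit_vector_multiple)
  have "2 * cinner x (x - y) = cinner (x - y) (x - y)"
    using assms by (simp add: cinner_simps)
  then have "2 * of_real n * cinner x v = of_real n * of_real n"
    using \<open>cinner v v = 1\<close> by (simp add: v cinner_simps mult_ac)
  then have "2 * cinner x v = of_real n"
    using \<open>0 < n\<close> by (simp add: mult.assoc)
  then have "cadj (phase_along (-1) v) *v x = y"
    by (simp add: cadj_phase_along phase_along_mult_vec vec_eq_iff algebra_simps
        flip: diff_eq_eq[of x y] v)
  then show ?thesis
    using that unitary_phase_along[OF _ \<open>cinner v v = 1\<close>, of "-1"] by simp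
qed

lemma exists_unitary_adj_real_coordinate:
  fixes w :: "complex^'d"
  obtains U where "unitary_mat U" "(cadj U *v w) $ i = of_real (cmod (w $ i))"
proof
  define \<omega> where "\<omega> = (if w $ i = 0 then 1 else w $ i / cmod (w $ i))"
  have "cmod \<omega> = 1"
    by (simp add: \<omega>_def norm_divide)
  moreover have "cinner (axis i 1) (axis i 1 :: complex^'d) = 1"
    by (simp add: cinner_axis_right)
  ultimately show "unitary_mat (phase_along \<omega> (axis i 1 :: complex^'d))"
    by (rule unitary_phase_along)
  have "cnj \<omega> * w $ i = of_real (cmod (w $ i))"
    by (simp add: \<omega>_def complex_norm_square[symmetric] power2_eq_square field_simps)
  then show "(cadj (phase_along \<omega> (axis i 1)) *v w) $ i = of_real (cmod (w $ i))"
    by (simp add: cadj_phase_along phase_along_mult_vec cinner_axis_right algebra_simps)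
qed

lemma exists_unitary_adj_to_axis:
  fixes w :: "complex^'d"
  obtains U where "unitary_mat U" "cadj U *v w = of_real (norm w) *s axis i 1"
proof -
  obtain U1 where U1: "unitary_mat U1" "(cadj U1 *v w) $ i = of_real (cmod (w $ i))"
    by (rule exists_unitary_adj_real_coordinate)
  have "cinner (cadj U1 *v w) (cadj U1 *v w) =
      cinner (of_real (norm w) *s axis i 1) (of_real (norm w) *s axis i 1 :: complex^'d)"
    by (simp add: cinner_self norm_unitary_adj[OF U1(1)] norm_smult_axis)
  moreover have "cinner (of_real (norm w) *s axis i 1) (cadj U1 *v w) =
      cinner (cadj U1 *v w) (of_real (norm w) *s axis i 1)"
    using U1(2) by (simp add: cinner_smult_left cinner_smult_right cinner_axis_left cinner_axis_right)
  ultimately obtain U2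
    where U2: "unitary_mat U2" "cadj U2 *v (cadj U1 *v w) = of_real (norm w) *s axis i 1"
    by (rule exists_unitary_adj_exchange)
  show ?thesis
  proof (rule that)
    show "unitary_mat (U1 ** U2)"
      by (rule unitary_mat_mult[OF U1(1) U2(1)])
    show "cadj (U1 ** U2) *v w = of_real (norm w) *s axis i 1"
      using U2(2) by (simp add: cadj_matrix_mult flip: matrix_vector_mul_assoc)
  qed
qed

section \<open>Holomorphic functions on discs and along lines\<close>

lemma islimpt_sphere_cmod:
  assumes "\<mu> \<noteq> 0"
  shows "\<mu> islimpt sphere 0 (cmod \<mu>)"
proof (rule connected_imp_perfect)
  show "connected (sphere (0::complex) (cmod \<mu>))"
    by (rule connected_sphere) simp
  show "\<mu> \<in> sphere 0 (cmod \<mu>)"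
    by simp
  have "-\<mu> \<in> sphere 0 (cmod \<mu>)" "-\<mu> \<noteq> \<mu>"
    using assms by auto
  then show "sphere 0 (cmod \<mu>) \<noteq> {x}" for x :: complex
    using \<open>\<mu> \<in> sphere 0 (cmod \<mu>)\<close> by (metis singletonD)
qed

lemma holomorphic_circle_invariant_eq_center:
  assumes "g holomorphic_on ball 0 r"
    and invariant: "\<And>\<omega> \<mu>. cmod \<omega> = 1 \<Longrightarrow> \<mu> \<in> ball 0 r \<Longrightarrow> g (\<omega> * \<mu>) = g \<mu>"
    and "\<mu> \<in> ball 0 r"
  shows "g \<mu> = g 0"
proof (cases "\<mu> = 0")
  case False
  have "(\<lambda>x. g x - g \<mu>) 0 = 0"
  proof (rule analytic_continuation[where f = "\<lambda>x. g x - g \<mu>", OF _ open_ball connected_ball _ _ islimpt_sphere_cmod[OF False]])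
    show "(\<lambda>x. g x - g \<mu>) holomorphic_on ball 0 r"
      using assms(1) by (intro holomorphic_intros)
    show "sphere 0 (cmod \<mu>) \<subseteq> ball 0 r" "\<mu> \<in> ball 0 r" "(0::complex) \<in> ball 0 r"
      using assms(3) by (auto intro: le_less_trans[OF norm_ge_zero])
    show "g x - g \<mu> = 0" if "x \<in> sphere 0 (cmod \<mu>)" for x
      using invariant[of "x / \<mu>" \<mu>] that False assms(3) by (simp add: norm_divide)
  qed
  then show ?thesis
    by simp
qed simp

lemma holomorphic_circle_cnj_covariant_eq_0:
  assumes "g holomorphic_on ball 0 r"
    and covariant: "\<And>\<omega> \<mu>. cmod \<omega> = 1 \<Longrightarrow> \<mu> \<in> ball 0 r \<Longrightarrow> g (\<omega> * \<mu>) = cnj \<omega> * g \<mu>"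
    and "\<mu> \<in> ball 0 r"
  shows "g \<mu> = 0"
proof (cases "\<mu> = 0")
  case True
  then show ?thesis
    using covariant[of "-1" 0] assms(3) by simp
next
  case False
  have "\<mu> * g \<mu> = 0 * g 0"
  proof (rule holomorphic_circle_invariant_eq_center[where g = "\<lambda>x. x * g x", OF _ _ assms(3)])
    show "(\<lambda>x. x * g x) holomorphic_on ball 0 r"
      using assms(1) by (intro holomorphic_intros)
    show "\<omega> * \<nu> * g (\<omega> * \<nu>) = \<nu> * g \<nu>" if "cmod \<omega> = 1" "\<nu> \<in> ball 0 r" for \<omega> \<nu>
      using covariant[OF that] cnj_mult_unimodular[OF that(1)]
      by (simp add: mult_ac)
  qed
  then show ?thesis
    using False by simp
qed

lemma isCont_eq_0_if_punctured_eq_0: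
  fixes \<phi> :: "complex \<Rightarrow> complex"
  assumes "isCont \<phi> 0" "0 < \<delta>" "\<And>e. e \<noteq> 0 \<Longrightarrow> cmod e < \<delta> \<Longrightarrow> \<phi> e = 0"
  shows "\<phi> 0 = 0"
proof -
  have "eventually (\<lambda>e. \<phi> e = 0) (at (0::complex))"
    unfolding eventually_at using assms(2,3) by (auto simp: dist_norm)
  then have "(\<phi> \<longlongrightarrow> 0) (at 0)"
    by (rule tendsto_eventually)
  with assms(1) show ?thesis
    unfolding isCont_def by (rule tendsto_unique[OF at_neq_bot])
qed

definition powser_converges_on_disc :: "(nat \<Rightarrow> complex) \<Rightarrow> bool" where
  "powser_converges_on_disc a \<longleftrightarrow> (\<forall>t. cmod t < 1 \<longrightarrow> summable (\<lambda>n. a n * t ^ n))"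

lemma unit_disc_between:
  assumes "cmod t < 1"
  obtains x :: complex where "cmod t < cmod x" "cmod x < 1"
proof -
  obtain r where "cmod t < r" "r < 1"
    using assms dense by blast
  moreover have "cmod (of_real r :: complex) = r"
    using \<open>cmod t < r\<close> by (simp add: abs_of_pos le_less_trans[OF norm_ge_zero])
  ultimately show ?thesis
    using that by metis
qed

lemma powser_converges_on_disc_norm:
  assumes "powser_converges_on_disc a" "cmod t < 1"
  shows "summable (\<lambda>n. norm (a n * t ^ n))"
proof -
  obtain x where "cmod t < cmod x" "cmod x < 1"
    using unit_disc_between[OF assms(2)] .
  then show ?thesis
    using assms(1) powser_insidea[of a x t] by (simp add: powser_converges_on_disc_def)
qed

lemma powser_converges_on_disc_Suc:
  "powser_converges_on_disc a \<Longrightarrow> powser_converges_on_disc (\<lambda>n. a (Suc n))"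
  unfolding powser_converges_on_disc_def using powser_split_head(3) by blast

lemma isCont_powser_on_disc:
  assumes "powser_converges_on_disc a" "cmod t < 1"
  shows "isCont (\<lambda>t. \<Sum>n. a n * t ^ n) t"
proof -
  obtain x where "cmod t < cmod x" "cmod x < 1"
    using unit_disc_between[OF assms(2)] .
  then show ?thesis
    using assms(1) isCont_powser[of a x t] by (simp add: powser_converges_on_disc_def)
qed

lemma holomorphic_on_disc_powser:
  assumes "h holomorphic_on ball 0 1"
  obtains a where "powser_converges_on_disc a" "\<And>t. cmod t < 1 \<Longrightarrow> h t = (\<Sum>n. a n * t ^ n)"
proof
  define a where "a n = (deriv ^^ n) h 0 / fact n" for n
  have "(\<lambda>n. a n * t ^ n) sums h t" if "cmod t < 1" for t
    using holomorphic_power_series[OF assms, of t] that by (simp add: a_def)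
  then show "powser_converges_on_disc a" "\<And>t. cmod t < 1 \<Longrightarrow> h t = (\<Sum>n. a n * t ^ n)"
    unfolding powser_converges_on_disc_def by (auto simp: sums_iff)
qed

lemma holomorphic_on_disc_divide_z:
  assumes "h holomorphic_on ball 0 1" "h 0 = 0"
  obtains b where "powser_converges_on_disc b" "\<And>t. cmod t < 1 \<Longrightarrow> h t = t * (\<Sum>n. b n * t ^ n)"
proof -
  obtain a where a: "powser_converges_on_disc a" and h: "\<And>t. cmod t < 1 \<Longrightarrow> h t = (\<Sum>n. a n * t ^ n)"
    using holomorphic_on_disc_powser[OF assms(1)] by blast
  have "a 0 = 0"
    using h[of 0] assms(2) by simp
  then have "h t = t * (\<Sum>n. a (Suc n) * t ^ n)" if "cmod t < 1" for t
    using h[OF that] powser_split_head(1)[of a t] a that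
    by (simp add: powser_converges_on_disc_def mult.commute)
  with powser_converges_on_disc_Suc[OF a] show ?thesis
    using that by blast
qed

lemma bounded_linear_smult_vec_left: "bounded_linear (\<lambda>c::complex. c *s (b::complex^'d))"
proof (rule bounded_linear_intro[where K = "norm b"])
  show "(x + y) *s b = x *s b + y *s b" for x y
    by (rule vector_sadd_rdistrib)
  show "(r *\<^sub>R x) *s b = r *\<^sub>R (x *s b)" for r x
    by (simp add: vec_eq_iff)
  show "norm (x *s b) \<le> norm x * norm b" for x
    by (simp add: norm_smult_vec)
qed

lemma holo_on_along_line:
  assumes "holo_on (ball 0 1) F" "open S" "\<And>t. t \<in> S \<Longrightarrow> a + t *s b \<in> ball 0 1"
  shows "(\<lambda>t. F (a + t *s b)) holomorphic_on S"
  unfolding holomorphic_on_open[OF assms(2)]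
proof
  fix t
  assume "t \<in> S"
  then obtain F' where F': "(F has_derivative F') (at (a + t *s b))" "\<And>c v. F' (c *s v) = c * F' v"
    using assms(1,3) unfolding holo_on_def by blast
  have "((\<lambda>t. a + t *s b) has_derivative (\<lambda>h. h *s b)) (at t)"
    using has_derivative_add[OF has_derivative_const bounded_linear_imp_has_derivative[OF
          bounded_linear_smult_vec_left]] by simp
  from has_derivative_compose[OF this F'(1)]
  have "((\<lambda>t. F (a + t *s b)) has_derivative (\<lambda>h. F' (h *s b))) (at t)" .
  moreover have "(\<lambda>h. F' (h *s b)) = (*) (F' b)"
    using F'(2) by (auto simp: mult.commute)
  ultimately show "\<exists>f'. ((\<lambda>t. F (a + t *s b)) has_field_derivative f') (at t)"
    unfolding has_field_derivative_def by metis
qed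

lemma image_cnj_ball: "cnj ` ball (0::complex) r = ball 0 r"
  by (auto intro!: image_eqI[where x = "cnj x" for x])

lemma antiholo_on_along_line:
  assumes "holo_on (ball 0 1) (\<lambda>w. cnj (G w))" "\<And>\<zeta>. \<zeta> \<in> ball 0 r \<Longrightarrow> cnj \<zeta> *s b \<in> ball 0 1"
  shows "(\<lambda>\<zeta>. G (cnj \<zeta> *s b)) holomorphic_on ball 0 r"
proof -
  have "(\<lambda>t. cnj (G (0 + t *s b))) holomorphic_on cnj ` ball 0 r"
    unfolding image_cnj_ball
    by (rule holo_on_along_line[OF assms(1) open_ball]) (metis add_0 assms(2) complex_cnj_cnj image_cnj_ball imageI)
  from holomorphic_on_compose_cnj_cnj[OF this open_ball] show ?thesis
    by (simp add: o_def)
qed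

section \<open>The invariant kernels \<open>f \<langle>z, w\<rangle> I + g \<langle>z, w\<rangle> z w\<^sup>*\<close>\<close>

definition canonical_kernel ::
    "(complex \<Rightarrow> complex) \<Rightarrow> (complex \<Rightarrow> complex) \<Rightarrow> complex^'d \<Rightarrow> complex^'d \<Rightarrow> complex^'d^'d" where
  "canonical_kernel f g z w = cscale (f (cinner z w)) (mat 1) + cscale (g (cinner z w)) (outer z w)"

lemma canonical_kernel_mult_vec:
  "canonical_kernel f g z w *v y = f (cinner z w) *s y + (g (cinner z w) * cinner y w) *s z"
  by (simp add: canonical_kernel_def matrix_vector_mult_add_rdistrib cscale_mult_vec outer_mult_vec
      vector_smult_assoc)

lemma canonical_kernel_nth:
  "canonical_kernel f g z w $ i $ j =
     f (cinner z w) * (if i = j then 1 else 0) + g (cinner z w) * (z $ i * cnj (w $ j))"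
  by (simp add: canonical_kernel_def cscale_def outer_def mat_def)

lemma canonical_kernel_cong:
  "f (cinner z w) = f' (cinner z w) \<Longrightarrow> g (cinner z w) = g' (cinner z w) \<Longrightarrow>
    canonical_kernel f g z w = canonical_kernel f' g' z w"
  by (simp add: canonical_kernel_def)

lemma isCont_canonical_kernel_nth_along_line:
  assumes "isCont f 0" "isCont g 0" "\<And>\<epsilon>. cinner (z + \<epsilon> *s v) w = c * \<epsilon>"
  shows "isCont (\<lambda>\<epsilon>. canonical_kernel f g (z + \<epsilon> *s v) w $ j $ k) 0"
proof -
  have "isCont (\<lambda>\<epsilon>. f (c * \<epsilon>)) 0" "isCont (\<lambda>\<epsilon>. g (c * \<epsilon>)) 0"
    using assms(1,2) by (simp_all add: isCont_o2[where f = "\<lambda>\<epsilon>. c * \<epsilon>"])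
  then show ?thesis
    unfolding canonical_kernel_nth assms(3) vector_add_component vector_smult_component
    by (intro continuous_intros)
qed

lemma canonical_kernel_unitary_conj:
  assumes "unitary_mat U"
  shows "U *v (canonical_kernel f g (cadj U *v z) (cadj U *v w) *v (cadj U *v x)) =
    canonical_kernel f g z w *v x"
  by (simp add: canonical_kernel_mult_vec cinner_unitary_adj[OF assms] matrix_vector_right_distrib
      vector_scalar_commute unitary_matD[OF assms])

section \<open>Quasi-invariant kernels\<close>

locale quasi_invariant_kernel =
  fixes K :: "complex^'d \<Rightarrow> complex^'d \<Rightarrow> complex^'d^'d"
  assumes sesqui_analytic: "sesqui_analytic K"
    and hermitian: "hermitian_kernel K"
    and quasi_invariant: "quasi_invariant_id K"
begin

lemma K_mult_vec_unitary_conj: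
  assumes "unitary_mat U" "z \<in> ball 0 1" "w \<in> ball 0 1"
  shows "K z w *v x = U *v (K (cadj U *v z) (cadj U *v w) *v (cadj U *v x))"
  using quasi_invariant assms unfolding quasi_invariant_id_def by (metis matrix_vector_mul_assoc)

lemma K_eq_canonical_kernel_unitary_conj:
  assumes "unitary_mat U" "z \<in> ball 0 1" "w \<in> ball 0 1"
    and "K (cadj U *v z) (cadj U *v w) = canonical_kernel f g (cadj U *v z) (cadj U *v w)"
  shows "K z w = canonical_kernel f g z w"
  using K_mult_vec_unitary_conj[OF assms(1-3)] canonical_kernel_unitary_conj[OF assms(1)] assms(4)
  by (simp add: matrix_eq)

lemma K_phase_invariant:
  assumes "cmod \<omega> = 1" "z \<in> ball 0 1" "w \<in> ball 0 1"
  shows "K (\<omega> *s z) (\<omega> *s w) = K z w"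
proof -
  have "cmod (cnj \<omega>) = 1"
    using assms(1) by simp
  note U = unitary_scalar_mat[OF this]
  have "\<omega> * cnj \<omega> = 1"
    using cnj_mult_unimodular[OF assms(1)] by (simp add: mult.commute)
  then have "K z w *v x = K (\<omega> *s z) (\<omega> *s w) *v x" for x
    using K_mult_vec_unitary_conj[OF U(1) assms(2,3), of x]
    by (simp add: U(2) cscale_mult_vec vector_scalar_commute vector_smult_assoc)
  then show ?thesis
    by (simp add: matrix_eq)
qed

lemma K_holomorphic_along_line:
  assumes "w \<in> ball 0 1" "open S" "\<And>t. t \<in> S \<Longrightarrow> a + t *s b \<in> ball 0 1"
  shows "(\<lambda>t. K (a + t *s b) w $ i $ j) holomorphic_on S"
  using holo_on_along_line[OF _ assms(2,3)] sesqui_analytic assms(1)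
  unfolding sesqui_analytic_def by blast

lemma cinner_K_holomorphic_along_line:
  assumes "w \<in> ball 0 1" "open S" "\<And>t. t \<in> S \<Longrightarrow> a + t *s b \<in> ball 0 1"
  shows "(\<lambda>t. cinner (K (a + t *s b) w *v y) x) holomorphic_on S"
  unfolding cinner_def matrix_vector_mult_def vec_lambda_beta
  by (intro holomorphic_intros K_holomorphic_along_line[OF assms])

lemma isCont_K_along_line:
  assumes "w \<in> ball 0 1" "0 < r" "\<And>t. t \<in> ball 0 r \<Longrightarrow> a + t *s b \<in> ball 0 1"
  shows "isCont (\<lambda>t. K (a + t *s b) w $ i $ j) 0"
proof -
  have "continuous_on (ball 0 r) (\<lambda>t. K (a + t *s b) w $ i $ j)"
    by (rule holomorphic_on_imp_continuous_on[OF K_holomorphic_along_line[OF assms(1) open_ball assms(3)]])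
  then show ?thesis
    using assms(2) by (simp add: continuous_on_eq_continuous_at)
qed

lemma K_antiholomorphic_along_line:
  assumes "z \<in> ball 0 1" "\<And>\<zeta>. \<zeta> \<in> ball 0 r \<Longrightarrow> cnj \<zeta> *s b \<in> ball 0 1"
  shows "(\<lambda>\<zeta>. K z (cnj \<zeta> *s b) $ i $ j) holomorphic_on ball 0 r"
  using antiholo_on_along_line[where G = "\<lambda>w. K z w $ i $ j", OF _ assms(2)] sesqui_analytic assms(1)
  unfolding sesqui_analytic_def by blast

text \<open>Both sides are holomorphic in \<open>\<zeta>\<close> and agree on the unit circle by phase invariance.\<close>

lemma K_smult_left_eq_smult_right:
  assumes "z \<in> ball 0 1" "w \<in> ball 0 1" "\<zeta> *s z \<in> ball 0 1" "\<zeta> *s w \<in> ball 0 1"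
  shows "K (\<zeta> *s z) w = K z (cnj \<zeta> *s w)"
proof (cases "z = 0 \<and> w = 0")
  case False
  define m where "m = max (norm z) (norm w)"
  have "0 < m" "m < 1"
    using False assms(1,2) by (auto simp: m_def less_max_iff_disj)
  have in_ball: "t *s z \<in> ball 0 1" "cnj t *s w \<in> ball 0 1" if "t \<in> ball 0 (1 / m)" for t
  proof -
    have "cmod t * m < 1"
      using that \<open>0 < m\<close> by (simp add: field_simps)
    moreover have "cmod t * norm z \<le> cmod t * m" "cmod t * norm w \<le> cmod t * m"
      by (simp_all add: m_def mult_left_mono)
    ultimately show "t *s z \<in> ball 0 1" "cnj t *s w \<in> ball 0 1"
      by (simp_all add: norm_smult_vec)
  qed
  have "\<zeta> \<in> ball 0 (1 / m)"
    using assms(3,4) \<open>0 < m\<close> by (simp add: m_def norm_smult_vec field_simps max_def)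
  have "K (\<zeta> *s z) w $ i $ j - K z (cnj \<zeta> *s w) $ i $ j = 0" for i j
  proof (rule analytic_continuation[where f = "\<lambda>t. K (t *s z) w $ i $ j - K z (cnj t *s w) $ i $ j",
        OF _ open_ball connected_ball _ _ islimpt_sphere_cmod[of 1]])
    show "(\<lambda>t. K (t *s z) w $ i $ j - K z (cnj t *s w) $ i $ j) holomorphic_on ball 0 (1 / m)"
      using K_holomorphic_along_line[where S = "ball 0 (1 / m)" and a = 0 and b = z, OF assms(2) open_ball]
        K_antiholomorphic_along_line[where r = "1 / m" and b = w, OF assms(1)] in_ball
      by (intro holomorphic_intros) auto
    show "sphere 0 (cmod 1) \<subseteq> ball (0::complex) (1 / m)" "(1::complex) \<in> ball 0 (1 / m)"
      using \<open>0 < m\<close> \<open>m < 1\<close> by (auto simp: field_simps)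
    show "K (t *s z) w $ i $ j - K z (cnj t *s w) $ i $ j = 0" if "t \<in> sphere 0 (cmod 1)" for t
    proof -
      have "t \<in> ball 0 (1 / m)"
        using that \<open>0 < m\<close> \<open>m < 1\<close> by (simp add: field_simps)
      then show ?thesis
        using K_phase_invariant[of "cnj t" "t *s z" w] in_ball(1) that assms(2)
        by (simp add: vector_smult_assoc cnj_mult_unimodular)
    qed
  qed (use \<open>\<zeta> \<in> ball 0 (1 / m)\<close> in auto)
  then show ?thesis
    by (simp add: vec_eq_iff)
qed simp

lemma K_zero_left: "w \<in> ball 0 1 \<Longrightarrow> K 0 w = K 0 0"
  using K_smult_left_eq_smult_right[of 0 w 0] by simp

lemma K_zero_right: "z \<in> ball 0 1 \<Longrightarrow> K z 0 = K 0 0"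
  using K_smult_left_eq_smult_right[of z 0 0] by simp

text \<open>On the line \<open>z + t v\<close> with \<open>v \<bottom> z, w\<close>, the substitution \<open>t \<mapsto> \<omega> t\<close> is realised by
  the unitary \<open>phase_along (cnj \<omega>) v\<close>, which fixes \<open>z\<close> and \<open>w\<close>.\<close>

context
  fixes v w z :: "complex^'d"
  assumes v: "cinner v v = 1" and wv: "cinner w v = 0" and w: "w \<in> ball 0 1"
    and zv: "cinner z v = 0" and z: "z \<in> ball 0 1"
begin

lemma cinner_K_line_holomorphic:
  "(\<lambda>t. cinner (K (z + t *s v) w *v y) x) holomorphic_on ball 0 (sqrt (1 - (norm z)\<^sup>2))"
  using cinner_K_holomorphic_along_line[OF w open_ball] orthogonal_line_in_ball_iff[OF zv v z]
  by blast

lemma cinner_K_line_rotate: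
  assumes "cmod \<omega> = 1" "z + t *s v \<in> ball 0 1"
  shows "cinner (K (z + (\<omega> * t) *s v) w *v y) x =
    cinner (K (z + t *s v) w *v (phase_along (cnj \<omega>) v *v y)) (phase_along (cnj \<omega>) v *v x)"
proof -
  have "z + (\<omega> * t) *s v \<in> ball 0 1"
    using assms orthogonal_line_in_ball_iff[OF zv v z] by (simp add: norm_mult)
  moreover have "phase_along (cnj \<omega>) v *v (z + (\<omega> * t) *s v) = z + t *s v"
    using zv v cnj_mult_unimodular[OF assms(1)]
    by (simp add: phase_along_mult_vec cinner_simps vec_eq_iff algebra_simps)
  ultimately show ?thesis
    using K_mult_vec_unitary_conj[OF unitary_phase_along[OF assms(1) v] _ w, of _ y]
    by (simp add: cadj_phase_along phase_along_orthogonal[OF wv] cinner_mult_vec_adjoint)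
qed

lemma cinner_K_line_orthogonal_const:
  assumes "cinner x v = 0" "cinner y v = 0" "z + t *s v \<in> ball 0 1"
  shows "cinner (K (z + t *s v) w *v y) x = cinner (K z w *v y) x"
  using holomorphic_circle_invariant_eq_center[OF cinner_K_line_holomorphic, where \<mu> = t]
    cinner_K_line_rotate phase_along_orthogonal[OF assms(1)] phase_along_orthogonal[OF assms(2)]
    orthogonal_line_in_ball_iff[OF zv v z] assms(3)
  by simp

lemma cinner_K_line_axis_const:
  assumes "z + t *s v \<in> ball 0 1"
  shows "cinner (K (z + t *s v) w *v v) v = cinner (K z w *v v) v"
proof -
  have "cinner (K (z + (\<omega> * \<mu>) *s v) w *v v) v = cinner (K (z + \<mu> *s v) w *v v) v"
    if "cmod \<omega> = 1" "z + \<mu> *s v \<in> ball 0 1" for \<omega> \<mu>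
    using cinner_K_line_rotate[OF that] cnj_mult_unimodular[OF that(1)]
      cnj_mult_unimodular[OF that(1), unfolded mult.commute[of "cnj \<omega>"]]
    by (simp add: phase_along_self[OF v] vector_scalar_commute cinner_simps mult.assoc[symmetric])
  then show ?thesis
    using holomorphic_circle_invariant_eq_center[OF cinner_K_line_holomorphic, where \<mu> = t]
      orthogonal_line_in_ball_iff[OF zv v z] assms
    by simp
qed

lemma cinner_K_line_mixed_eq_0:
  assumes "cinner x v = 0" "z + t *s v \<in> ball 0 1"
  shows "cinner (K (z + t *s v) w *v v) x = 0"
  using holomorphic_circle_cnj_covariant_eq_0[OF cinner_K_line_holomorphic, where \<mu> = t]
    cinner_K_line_rotate phase_along_self[OF v] phase_along_orthogonal[OF assms(1)]
    orthogonal_line_in_ball_iff[OF zv v z] assms(2)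
  by (simp add: vector_scalar_commute cinner_smult_left)

end

lemma K_mult_vec_orthogonal_unit:
  assumes "cinner v v = 1" "cinner w v = 0" "w \<in> ball 0 1" "z \<in> ball 0 1"
  shows "K z w *v v = cinner (K z w *v v) v *s v"
proof -
  define r where "r = K z w *v v - cinner (K z w *v v) v *s v"
  define z0 where "z0 = z - cinner z v *s v"
  have "cinner z0 v = 0" "cinner r v = 0"
    using assms(1) by (simp_all add: z0_def r_def cinner_simps)
  moreover have "z = z0 + cinner z v *s v"
    by (simp add: z0_def)
  ultimately have "cinner (K z w *v v) r = 0"
    using cinner_K_line_mixed_eq_0[OF assms(1-3) _ orthogonal_projection_in_ball[OF assms(1,4)]]
      assms(4)
    by (metis z0_def)
  then have "cinner r r = 0"
    using \<open>cinner r v = 0\<close> cinner_eq_0_commute[of r v] assms(1) by (simp add: r_def cinner_simps)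
  then show ?thesis
    by (simp add: r_def)
qed

lemma K_eigenvector_if_orthogonal:
  assumes "cinner x w = 0" "w \<in> ball 0 1" "z \<in> ball 0 1"
  shows "\<exists>c. K z w *v x = c *s x"
proof (cases "x = 0")
  case False
  then obtain v n where "cinner v v = 1" and x: "x = of_real n *s v" "0 < n"
    by (rule unit_vector_multiple)
  moreover have "cinner w v = 0"
    using assms(1) cinner_eq_0_commute[of x w] x by (simp add: cinner_smult_right)
  ultimately have "K z w *v x = cinner (K z w *v v) v *s x"
    using K_mult_vec_orthogonal_unit[OF _ _ assms(2,3)]
    by (metis vector_scalar_commute vector_smult_assoc mult.commute)
  then show ?thesis
    by blast
qed simp

end

context quasi_invariant_kernel
begin

text \<open>\<open>K (\<zeta> e\<^sub>i) (s e\<^sub>i)\<close> depends only on the product \<open>s \<zeta>\<close>, by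
  \<open>K_smult_left_eq_smult_right\<close>; the definition uses the representative \<open>s = (1 + |t|) / 2\<close>.\<close>

definition axis_kernel :: "'d \<Rightarrow> complex \<Rightarrow> complex^'d^'d" where
  "axis_kernel i t =
     K ((t / of_real ((1 + cmod t) / 2)) *s axis i 1) (of_real ((1 + cmod t) / 2) *s axis i 1)"

lemma K_axis_eq_axis_kernel:
  assumes "0 < s" "s < 1" "cmod \<zeta> < 1"
  shows "K (\<zeta> *s axis i 1) (of_real s *s axis i 1) = axis_kernel i (of_real s * \<zeta>)"
proof -
  define t where "t = of_real s * \<zeta>"
  define r where "r = (1 + cmod t) / 2"
  have "cmod t = s * cmod \<zeta>"
    using assms(1) by (simp add: t_def norm_mult)
  also have "\<dots> < 1 * 1"
    using assms by (intro mult_strict_mono) auto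
  finally have r: "cmod t < r" "r < 1" "0 < r"
    by (auto simp: r_def intro: add_pos_nonneg)
  have "of_real (r / s) * (t / of_real r) = \<zeta>" "of_real (r / s) * of_real s = (of_real r :: complex)"
    using r assms(1) by (simp_all add: t_def field_simps)
  then have "K (\<zeta> *s axis i 1) (of_real s *s axis i 1) = K ((t / of_real r) *s axis i 1) (of_real r *s axis i 1)"
    using K_smult_left_eq_smult_right[of "(t / of_real r) *s axis i 1" "of_real s *s axis i 1" "of_real (r / s)"]
      r assms
    by (simp add: vector_smult_assoc norm_smult_axis norm_divide)
  then show ?thesis
    by (simp only: axis_kernel_def t_def[symmetric] r_def)
qed

lemma axis_kernel_holomorphic: "(\<lambda>t. axis_kernel i t $ j $ k) holomorphic_on ball 0 1"
proof -
  have "(\<lambda>t. axis_kernel i t $ j $ k) holomorphic_on ball 0 r" if "0 < r" "r < 1" for r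
  proof -
    have "(\<lambda>t. K (0 + t *s (of_real (1 / r) *s axis i 1)) (of_real r *s axis i 1) $ j $ k)
        holomorphic_on ball 0 r"
      by (rule K_holomorphic_along_line)
        (use that in \<open>simp_all add: vector_smult_assoc norm_smult_axis norm_divide\<close>)
    then show ?thesis
    proof (rule holomorphic_transform)
      fix t :: complex
      assume "t \<in> ball 0 r"
      then show "K (0 + t *s (of_real (1 / r) *s axis i 1)) (of_real r *s axis i 1) $ j $ k =
          axis_kernel i t $ j $ k"
        using K_axis_eq_axis_kernel[OF that, of "t / of_real r" i] that
        by (simp add: vector_smult_assoc norm_divide)
    qed
  qed
  then have "(\<lambda>t. axis_kernel i t $ j $ k) holomorphic_on (\<Union>r\<in>{0<..<1}. ball 0 r)"
    by (intro holomorphic_on_UN_open) auto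
  moreover have "ball 0 1 \<subseteq> (\<Union>r\<in>{0<..<1}. ball (0::complex) r)"
  proof
    fix t :: complex
    assume "t \<in> ball 0 1"
    then obtain r where "cmod t < r" "r < 1"
      using dense by auto
    moreover have "0 < r"
      using \<open>cmod t < r\<close> by (meson le_less_trans norm_ge_zero)
    ultimately show "t \<in> (\<Union>r\<in>{0<..<1}. ball 0 r)"
      by auto
  qed
  ultimately show ?thesis
    by (rule holomorphic_on_subset)
qed

lemma axis_kernel_zero: "axis_kernel i 0 = K 0 0"
  using K_zero_left[of "of_real (1 / 2) *s axis i 1"] by (simp add: axis_kernel_def norm_smult_axis)

lemma K_zero_zero_diag: "K 0 0 $ i $ i = K 0 0 $ j $ j"
proof -
  have "K 0 0 *v axis i 1 = (K 0 0 $ j $ j) *s axis i 1"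
    by (rule common_eigenvalue_axis[where P = "\<lambda>_. True"])
      (use K_eigenvector_if_orthogonal[of _ 0 0] in auto)
  from arg_cong[OF this, where f = "\<lambda>x. x $ i"] show ?thesis
    by (simp add: mult_vec_axis_nth)
qed

context
  fixes i0 :: 'd and s :: real
  assumes s: "0 < s" "s < 1"
begin

lemma axis_point_in_ball: "(of_real s *s axis i0 1 :: complex^'d) \<in> ball 0 1"
  using s by (simp add: norm_smult_axis dist_norm)

lemma cinner_axis_point: "cinner x (of_real s *s axis i0 1) = of_real s * x $ i0"
  by (simp add: cinner_smult_right cinner_axis_right)

lemma K_axis_orthogonal_scalar:
  assumes "i \<noteq> i0" "z \<in> ball 0 1" "cinner x (axis i0 1) = 0"
  shows "K z (of_real s *s axis i0 1) *v x = (K z (of_real s *s axis i0 1) $ i $ i) *s x"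
proof (rule common_eigenvalue_axis[where P = "\<lambda>x. cinner x (axis i0 1) = 0"])
  show "\<exists>c. K z (of_real s *s axis i0 1) *v x = c *s x" if "cinner x (axis i0 1) = 0" for x
    using K_eigenvector_if_orthogonal[OF _ axis_point_in_ball assms(2)] that
    by (simp add: cinner_smult_right)
  show "cinner (axis i 1) (axis i0 1) = 0"
    unfolding cinner_axis_right using assms(1) by (simp add: axis_def)
qed (use assms in \<open>simp_all add: cinner_simps\<close>)

text \<open>Along \<open>z\<^sub>i\<^sub>0 e\<^sub>i\<^sub>0 + t v\<close> with \<open>v \<bottom> e\<^sub>i\<^sub>0\<close>, the diagonal entries are the weight-zero
  entries, so they only depend on \<open>z\<^sub>i\<^sub>0\<close>, that is on \<open>\<langle>z, s e\<^sub>i\<^sub>0\<rangle>\<close>.\<close>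

lemma K_axis_diag_eq_at_coordinate:
  assumes "z \<in> ball 0 1"
  shows "K z (of_real s *s axis i0 1) $ i $ i = K (z $ i0 *s axis i0 1) (of_real s *s axis i0 1) $ i $ i"
proof -
  define e w z0 where "e = axis i0 (1::complex)" and "w = of_real s *s e" and "z0 = z $ i0 *s e"
  have "z0 \<in> ball 0 1"
    using assms Finite_Cartesian_Product.norm_nth_le[of z i0] by (simp add: z0_def e_def norm_smult_axis)
  from axis_orthogonal_decomposition[of z i0] show ?thesis
  proof cases
    case 1
    then show ?thesis
      by (simp flip: 1)
  next
    case (2 v t)
    then have "cinner v v = 1" "cinner w v = 0" "cinner z0 v = 0" "z = z0 + t *s v"
      using cinner_eq_0_commute[of v e] by (simp_all add: w_def z0_def e_def cinner_smult_left)
    note line = this(1-2) axis_point_in_ball[folded e_def, folded w_def] this(3) \<open>z0 \<in> ball 0 1\<close>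
    have "K z w $ i $ i = K z0 w $ i $ i"
    proof (cases "i = i0")
      case True
      have "cinner e v = 0"
        using 2(2) cinner_eq_0_commute e_def by blast
      from cinner_K_line_orthogonal_const[OF line this this, of t] show ?thesis
        using assms \<open>z = z0 + t *s v\<close> by (simp add: mat_nth_eq_cinner[of _ i0 i0] True e_def)
    next
      case False
      have diag: "K y w $ i $ i = cinner (K y w *v v) v" if "y \<in> ball 0 1" for y
        using K_axis_orthogonal_scalar[OF False that 2(2)] \<open>cinner v v = 1\<close>
        by (simp add: w_def e_def cinner_smult_left)
      show ?thesis
        using cinner_K_line_axis_const[OF line, of t] assms \<open>z = z0 + t *s v\<close> diag[OF assms]
          diag[OF \<open>z0 \<in> ball 0 1\<close>]
        by simp
    qed
    then show ?thesis
      by (simp add: w_def e_def z0_def)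
  qed
qed

lemma K_axis_diag:
  assumes "z \<in> ball 0 1"
  shows "K z (of_real s *s axis i0 1) $ i $ i =
    axis_kernel i0 (cinner z (of_real s *s axis i0 1)) $ i $ i"
proof -
  have "norm (z $ i0) < 1"
    using assms Finite_Cartesian_Product.norm_nth_le[of z i0] by simp
  then show ?thesis
    using K_axis_diag_eq_at_coordinate[OF assms] K_axis_eq_axis_kernel[OF s]
    by (simp add: cinner_axis_point)
qed

text \<open>The Hermitian symmetry turns the eigenvector property of \<open>K w z\<close> into a statement
  about the rows of \<open>K z w\<close>.\<close>

lemma K_axis_row:
  assumes "i \<noteq> i0" "z \<in> ball 0 1" "z $ i0 \<noteq> 0" "cinner z u = 0"
  shows "cinner (K z (of_real s *s axis i0 1) *v y) u = K z (of_real s *s axis i0 1) $ i $ i * cinner y u"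
proof (cases "u = 0")
  case False
  define e w where "e = axis i0 (1::complex)" and "w = of_real s *s e"
  define x where "x = u - u $ i0 *s e"
  have "cinner u z = 0"
    using assms(4) cinner_eq_0_commute by blast
  then obtain c where "K w z *v u = c *s u"
    using K_eigenvector_if_orthogonal[OF _ assms(2) axis_point_in_ball] by (auto simp: w_def e_def)
  moreover have "cadj (K z w) = K w z"
    using hermitian assms(2) axis_point_in_ball unfolding hermitian_kernel_def by (simp add: w_def e_def)
  ultimately have row: "cinner (K z w *v y) u = cnj c * cinner y u" for y
    by (simp add: cinner_mult_vec_adjoint cinner_smult_right)
  have "cinner x e = 0"
    by (simp add: x_def e_def cinner_simps cinner_axis_right)
  then have "K z w *v x = (K z w $ i $ i) *s x" and "cinner x u = cinner x x"
    using K_axis_orthogonal_scalar[OF assms(1,2)] by (simp_all add: x_def w_def e_def cinner_simps)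
  moreover have "x \<noteq> 0"
  proof
    assume "x = 0"
    then have "u = u $ i0 *s e"
      by (simp add: x_def)
    then have "cinner z u = cnj (u $ i0) * z $ i0"
      by (metis cinner_smult_right cinner_axis_right e_def)
    then show False
      using assms(3,4) False \<open>u = u $ i0 *s e\<close> by simp
  qed
  ultimately have "cnj c = K z w $ i $ i"
    using row[of x] by (simp add: cinner_smult_left)
  then show ?thesis
    using row by (simp add: w_def e_def)
qed simp

text \<open>Off the hyperplane \<open>z\<^sub>i\<^sub>0 = 0\<close>, \<open>K z w\<close> is a scalar on \<open>e\<^sub>i\<^sub>0\<^sup>\<bottom>\<close> and on rows
  orthogonal to \<open>z\<close>; this forces the rank-one correction to be a multiple of \<open>z w\<^sup>*\<close>.\<close>

lemma K_axis_scalar_plus_outer: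
  assumes "i \<noteq> i0" "z \<in> ball 0 1" "z $ i0 \<noteq> 0"
    and g: "cinner z (of_real s *s axis i0 1) * g =
      K z (of_real s *s axis i0 1) $ i0 $ i0 - K z (of_real s *s axis i0 1) $ i $ i"
  shows "K z (of_real s *s axis i0 1) =
    cscale (K z (of_real s *s axis i0 1) $ i $ i) (mat 1) + cscale g (outer z (of_real s *s axis i0 1))"
proof -
  define e w a where "e = axis i0 (1::complex)" and "w = of_real s *s e" and "a = K z w $ i $ i"
  define r where "r = K z w *v e - a *s e"
  have "cinner r u = 0" if "cinner z u = 0" for u
    using K_axis_row[OF assms(1-3) that, of e] by (simp add: r_def a_def w_def e_def cinner_simps)
  then have r: "r = (cinner r z / cinner z z) *s z"
    using assms(3) orthogonal_to_orthogonal_complement[of z r] by fastforce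
  have "cinner (K z w *v e) e - a = (cinner r z / cinner z z) * z $ i0"
    using arg_cong[OF r, where f = "\<lambda>x. cinner x e"]
    by (simp add: r_def e_def cinner_simps cinner_axis_right)
  then have "(cinner r z / cinner z z) * z $ i0 = of_real s * g * z $ i0"
    using g by (simp add: mat_nth_eq_cinner[of _ i0 i0] a_def w_def e_def cinner_axis_point mult_ac)
  then have "cinner r z / cinner z z = of_real s * g"
    using assms(3) by (metis mult_right_cancel)
  then have "r = (of_real s * g) *s z"
    using r by simp
  then have Ke: "K z w *v e = a *s e + (of_real s * g) *s z"
    by (simp add: r_def algebra_simps)
  have "K z w *v y = a *s y + (g * cinner y w) *s z" for y
  proof -
    have "cinner (y - y $ i0 *s e) e = 0"
      by (simp add: e_def cinner_simps cinner_axis_right)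
    then have perp: "K z w *v (y - y $ i0 *s e) = a *s (y - y $ i0 *s e)"
      using K_axis_orthogonal_scalar[OF assms(1,2)] by (simp add: a_def w_def e_def)
    have "K z w *v y = K z w *v (y - y $ i0 *s e) + y $ i0 *s (K z w *v e)"
      by (simp add: matrix_vector_mult_diff_distrib vector_scalar_commute)
    also have "\<dots> = a *s (y - y $ i0 *s e) + y $ i0 *s (a *s e + (of_real s * g) *s z)"
      by (simp only: perp Ke)
    also have "\<dots> = a *s y + (g * cinner y w) *s z"
      by (simp add: w_def e_def cinner_axis_point vec_eq_iff algebra_simps)
    finally show ?thesis .
  qed
  then show ?thesis
    by (simp add: matrix_eq matrix_vector_mult_add_rdistrib cscale_mult_vec outer_mult_vec
        a_def w_def e_def vector_smult_assoc)
qed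

end

end

context quasi_invariant_kernel
begin

context
  fixes i0 i :: 'd and s :: real and G :: "complex \<Rightarrow> complex"
  assumes s: "0 < s" "s < 1"
    and G: "\<And>t. cmod t < 1 \<Longrightarrow> t * G t = axis_kernel i0 t $ i0 $ i0 - axis_kernel i0 t $ i $ i"
begin

lemma K_axis_eq_canonical_kernel_dim_1:
  assumes "CARD('d) = 1" "z \<in> ball 0 1"
  shows "K z (of_real s *s axis i0 1) =
    canonical_kernel (\<lambda>t. axis_kernel i0 t $ i $ i) G z (of_real s *s axis i0 1)"
proof -
  have single: "j = i0" for j :: 'd
    using assms(1) by (metis card_1_singletonE UNIV_I singletonD)
  define w t where "w = (of_real s *s axis i0 1 :: complex^'d)" and "t = cinner z w"
  have "cmod t < 1"
    using cinner_in_unit_disc[OF assms(2) axis_point_in_ball[OF s]] by (simp add: t_def w_def)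
  then have "t * G t = 0"
    using G single[of i] by simp
  have "cnj (w $ i0) * z $ i0 = t"
    by (simp add: w_def t_def cinner_axis_point[OF s])
  then have "canonical_kernel (\<lambda>t. axis_kernel i0 t $ i $ i) G z w $ i0 $ i0 = axis_kernel i0 t $ i0 $ i0"
    using \<open>t * G t = 0\<close> single[of i] by (simp add: canonical_kernel_nth t_def[symmetric] mult_ac)
  then have "K z w $ j $ k = canonical_kernel (\<lambda>t. axis_kernel i0 t $ i $ i) G z w $ j $ k" for j k
    using K_axis_diag[OF s assms(2), of i0] single[of j] single[of k] by (simp add: t_def w_def)
  then show ?thesis
    by (simp add: vec_eq_iff w_def)
qed

lemma K_axis_eq_canonical_kernel_off_hyperplane:
  assumes "i \<noteq> i0" "z \<in> ball 0 1" "z $ i0 \<noteq> 0"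
  shows "K z (of_real s *s axis i0 1) =
    canonical_kernel (\<lambda>t. axis_kernel i0 t $ i $ i) G z (of_real s *s axis i0 1)"
proof -
  define w where "w = (of_real s *s axis i0 1 :: complex^'d)"
  have "cmod (cinner z w) < 1"
    using cinner_in_unit_disc[OF assms(2) axis_point_in_ball[OF s]] by (simp add: w_def)
  then have "cinner z w * G (cinner z w) = K z w $ i0 $ i0 - K z w $ i $ i"
    using G K_axis_diag[OF s assms(2)] by (simp add: w_def)
  from K_axis_scalar_plus_outer[OF s assms this[unfolded w_def]] show ?thesis
    by (simp add: canonical_kernel_def K_axis_diag[OF s assms(2)])
qed

text \<open>On the hyperplane \<open>z\<^sub>i\<^sub>0 = 0\<close> both sides are continuous along \<open>z + \<epsilon> e\<^sub>i\<^sub>0\<close> and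
  agree for \<open>\<epsilon> \<noteq> 0\<close>.\<close>

lemma K_axis_eq_canonical_kernel_other_index:
  assumes "i \<noteq> i0" "z \<in> ball 0 1" "isCont G 0"
  shows "K z (of_real s *s axis i0 1) =
    canonical_kernel (\<lambda>t. axis_kernel i0 t $ i $ i) G z (of_real s *s axis i0 1)"
proof (cases "z $ i0 = 0")
  case True
  define e w F where "e = axis i0 (1::complex)" and "w = of_real s *s e"
    and "F = (\<lambda>t. axis_kernel i0 t $ i $ i)"
  define \<delta> where "\<delta> = sqrt (1 - (norm z)\<^sup>2)"
  have "cinner z e = 0" "cinner e e = 1"
    using True by (simp_all add: e_def cinner_axis_right)
  from orthogonal_line_in_ball_iff[OF this assms(2)]
  have line: "z + \<epsilon> *s e \<in> ball 0 1 \<longleftrightarrow> \<epsilon> \<in> ball 0 \<delta>" for \<epsilon>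
    by (simp add: \<delta>_def)
  have "0 < \<delta>"
    using line[of 0] assms(2) by simp
  have "w \<in> ball 0 1"
    using axis_point_in_ball[OF s] by (simp add: w_def e_def)
  have cinner_line: "cinner (z + \<epsilon> *s e) w = of_real s * \<epsilon>" for \<epsilon>
    using True by (simp add: w_def e_def cinner_simps cinner_axis_point[OF s] cinner_axis_right)
  have "isCont F 0"
    unfolding F_def
    by (rule continuous_on_interior[OF holomorphic_on_imp_continuous_on[OF axis_kernel_holomorphic]]) simp
  have "K z w $ j $ k = canonical_kernel F G z w $ j $ k" for j k
  proof -
    define \<psi> where "\<psi> = (\<lambda>\<epsilon>. K (z + \<epsilon> *s e) w $ j $ k - canonical_kernel F G (z + \<epsilon> *s e) w $ j $ k)"
    have "isCont \<psi> 0"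
      unfolding \<psi>_def using line
      by (intro continuous_diff isCont_K_along_line[OF \<open>w \<in> ball 0 1\<close> \<open>0 < \<delta>\<close>]
          isCont_canonical_kernel_nth_along_line[OF \<open>isCont F 0\<close> assms(3) cinner_line]) blast
    moreover have "\<psi> \<epsilon> = 0" if "\<epsilon> \<noteq> 0" "cmod \<epsilon> < \<delta>" for \<epsilon>
    proof -
      have "z + \<epsilon> *s e \<in> ball 0 1" "(z + \<epsilon> *s e) $ i0 \<noteq> 0"
        using line[of \<epsilon>] that True by (simp_all add: e_def)
      from K_axis_eq_canonical_kernel_off_hyperplane[OF assms(1) this] show ?thesis
        by (simp add: \<psi>_def w_def e_def F_def)
    qed
    ultimately have "\<psi> 0 = 0"
      by (rule isCont_eq_0_if_punctured_eq_0[OF _ \<open>0 < \<delta>\<close>])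
    then show ?thesis
      by (simp add: \<psi>_def)
  qed
  then show ?thesis
    by (simp add: vec_eq_iff w_def e_def F_def)
next
  case False
  then show ?thesis
    by (rule K_axis_eq_canonical_kernel_off_hyperplane[OF assms(1,2)])
qed

lemma K_axis_eq_canonical_kernel:
  assumes "i \<noteq> i0 \<or> CARD('d) = 1" "z \<in> ball 0 1" "isCont G 0"
  shows "K z (of_real s *s axis i0 1) =
    canonical_kernel (\<lambda>t. axis_kernel i0 t $ i $ i) G z (of_real s *s axis i0 1)"
proof (cases "i = i0")
  case True
  with assms(1) have "CARD('d) = 1"
    by simp
  then show ?thesis
    by (rule K_axis_eq_canonical_kernel_dim_1[OF _ assms(2)])
next
  case False
  then show ?thesis
    by (rule K_axis_eq_canonical_kernel_other_index[OF _ assms(2,3)])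
qed

end

lemma K_eq_canonical_kernel_if_on_axis:
  assumes on_axis: "\<And>s z. 0 < s \<Longrightarrow> s < 1 \<Longrightarrow> z \<in> ball 0 1 \<Longrightarrow>
      K z (of_real s *s axis i 1) = canonical_kernel f g z (of_real s *s axis i 1)"
    and "z \<in> ball 0 1" "w \<in> ball 0 1"
  shows "K z w = canonical_kernel f g z w"
proof (cases "w = 0")
  case True
  have half: "(of_real (1 / 2) *s axis i 1 :: complex^'d) \<in> ball 0 1"
    by (simp add: norm_smult_axis)
  then have "K z w = canonical_kernel f g 0 (of_real (1 / 2) *s axis i 1)"
    using K_zero_right[OF assms(2)] K_zero_left[OF half] on_axis[of "1 / 2" 0] True by simp
  also have "\<dots> = canonical_kernel f g z 0"
    by (simp add: canonical_kernel_def outer_def cscale_def vec_eq_iff)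
  finally show ?thesis
    using True by simp
next
  case False
  obtain U where U: "unitary_mat U" "cadj U *v w = of_real (norm w) *s axis i 1"
    by (rule exists_unitary_adj_to_axis)
  have "cadj U *v z \<in> ball 0 1"
    using assms(2) by (simp add: norm_unitary_adj[OF U(1)])
  then show ?thesis
    using K_eq_canonical_kernel_unitary_conj[OF U(1) assms(2,3)] on_axis[of "norm w"] U(2) False assms(3)
    by simp
qed

theorem K_eq_canonical_kernel_powser:
  obtains a b where "powser_converges_on_disc a" "powser_converges_on_disc b"
    "\<And>z w. z \<in> ball 0 1 \<Longrightarrow> w \<in> ball 0 1 \<Longrightarrow>
      K z w = canonical_kernel (\<lambda>t. \<Sum>n. a n * t ^ n) (\<lambda>t. \<Sum>n. b n * t ^ n) z w"
proof -
  obtain i0 :: 'd where True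
    by simp
  obtain i :: 'd where i: "i \<noteq> i0 \<or> CARD('d) = 1"
    using exists_other_index[of i0] by blast
  define F H where "F = (\<lambda>t. axis_kernel i0 t $ i $ i)" and "H = (\<lambda>t. axis_kernel i0 t $ i0 $ i0)"
  obtain a where a: "powser_converges_on_disc a" "\<And>t. cmod t < 1 \<Longrightarrow> F t = (\<Sum>n. a n * t ^ n)"
    using holomorphic_on_disc_powser[OF axis_kernel_holomorphic] unfolding F_def by blast
  have hol: "(\<lambda>t. H t - F t) holomorphic_on ball 0 1" and zero: "H 0 - F 0 = 0"
    using axis_kernel_holomorphic
    by (auto intro!: holomorphic_intros simp: F_def H_def axis_kernel_zero K_zero_zero_diag[of i0 i])
  obtain b
    where b: "powser_converges_on_disc b" "\<And>t. cmod t < 1 \<Longrightarrow> H t - F t = t * (\<Sum>n. b n * t ^ n)"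
    using holomorphic_on_disc_divide_z[OF hol zero] by blast
  define G where "G t = (\<Sum>n. b n * t ^ n)" for t
  have G: "t * G t = axis_kernel i0 t $ i0 $ i0 - axis_kernel i0 t $ i $ i" if "cmod t < 1" for t
    using b(2)[OF that] by (simp add: F_def H_def G_def)
  have "isCont G 0"
    unfolding G_def[abs_def] by (rule isCont_powser_on_disc[OF b(1)]) simp
  have on_axis: "K z (of_real s *s axis i0 1) = canonical_kernel F G z (of_real s *s axis i0 1)"
    if "0 < s" "s < 1" "z \<in> ball 0 1" for s z
    using K_axis_eq_canonical_kernel[OF that(1,2) G i that(3) \<open>isCont G 0\<close>] by (simp add: F_def)
  show ?thesis
  proof (rule that[OF a(1) b(1)])
    fix z w :: "complex^'d"
    assume "z \<in> ball 0 1" "w \<in> ball 0 1"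
    then have "K z w = canonical_kernel F G z w"
      using K_eq_canonical_kernel_if_on_axis[where i = i0, OF on_axis] by blast
    also have "\<dots> = canonical_kernel (\<lambda>t. \<Sum>n. a n * t ^ n) (\<lambda>t. \<Sum>n. b n * t ^ n) z w"
      using a(2)[OF cinner_in_unit_disc[OF \<open>z \<in> ball 0 1\<close> \<open>w \<in> ball 0 1\<close>]]
      by (intro canonical_kernel_cong) (simp_all add: G_def)
    finally show "K z w = canonical_kernel (\<lambda>t. \<Sum>n. a n * t ^ n) (\<lambda>t. \<Sum>n. b n * t ^ n) z w" .
  qed
qed

end

section \<open>Expansion in the kernels \<open>Khat\<close> and \<open>Kperp\<close>\<close>

lemma Kperp_Suc:
  "Kperp (Suc m) z w =
    cscale (cinner z w ^ m / (of_nat (m + CARD('d)) * fact m)) (outer z (w::complex^'d))"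
  by (simp add: Kperp_def of_nat_fact)

lemma Khat_Suc:
  "Khat (Suc m) z w =
    cscale (cinner z w ^ m / (of_nat (m + CARD('d)) * fact m))
      (cscale (of_nat (m + CARD('d)) / of_nat (Suc m) * cinner z w) (mat 1) - outer z (w::complex^'d))"
  by (simp add: Khat_def of_nat_fact)

text \<open>The reproducing kernel of \<open>\<complex>\<^sup>d \<otimes> \<P>\<^sub>l\<close> is \<open>\<langle>z, w\<rangle>\<^sup>l / l! I\<close>, and it splits
  into the kernels of \<open>V\<^sub>l\<close> and of its orthogonal complement.\<close>

lemma Khat_add_Kperp:
  assumes "0 < l"
  shows "Khat l z w + Kperp l z w = cscale (cinner z w ^ l / fact l) (mat 1 :: complex^'d^'d)"
proof -
  obtain m where l: "l = Suc m"
    using assms gr0_implies_Suc by blast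
  define N S t where "N = (of_nat (m + CARD('d)) :: complex)" and "S = (of_nat (Suc m) :: complex)"
    and "t = cinner z w"
  have "N \<noteq> 0" "S \<noteq> 0"
    unfolding N_def S_def by (simp_all only: of_nat_eq_0_iff) simp_all
  then have "t ^ m / (N * fact m) * (N / S * t) = t * t ^ m / (S * fact m)"
    by (simp add: field_simps)
  also have "\<dots> = t ^ Suc m / fact (Suc m)"
    by (simp add: S_def)
  finally have coeff: "t ^ m / (N * fact m) * (N / S * t) = t ^ Suc m / fact (Suc m)" .
  have "Khat l z w + Kperp l z w = cscale (t ^ m / (N * fact m) * (N / S * t)) (mat 1)"
    unfolding l Khat_Suc Kperp_Suc N_def[symmetric] S_def[symmetric] t_def[symmetric]
    by (simp only: cscale_diff_right cscale_cscale diff_add_cancel)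
  then show ?thesis
    by (subst (asm) coeff) (simp only: l t_def)
qed

text \<open>Coefficients of the expansion of \<open>f(\<langle>z, w\<rangle>) I + g(\<langle>z, w\<rangle>) z w\<^sup>*\<close> for
  \<open>f t = \<Sum> a\<^sub>n t\<^sup>n\<close> and \<open>g t = \<Sum> b\<^sub>n t\<^sup>n\<close>; \<open>d\<close> is the dimension.\<close>

definition Khat_coeff :: "(nat \<Rightarrow> complex) \<Rightarrow> nat \<Rightarrow> complex" where
  "Khat_coeff a j = a j * fact j"

definition Kperp_coeff :: "nat \<Rightarrow> (nat \<Rightarrow> complex) \<Rightarrow> (nat \<Rightarrow> complex) \<Rightarrow> nat \<Rightarrow> complex" where
  "Kperp_coeff d a b j =
    (case j of 0 \<Rightarrow> 0 | Suc m \<Rightarrow> a (Suc m) * fact (Suc m) + b m * of_nat (m + d) * fact m)"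

lemma summable_Khat_coeff_Kperp_factor:
  assumes a: "powser_converges_on_disc a" and "cmod t < 1" "0 < d"
  shows "summable (\<lambda>m. Khat_coeff a (Suc m) * (t ^ m / (of_nat (m + d) * fact m)))"
proof (rule summable_comparison_test')
  show "summable (\<lambda>m. norm (a (Suc m) * t ^ m))"
    by (rule powser_converges_on_disc_norm[OF powser_converges_on_disc_Suc[OF a] \<open>cmod t < 1\<close>])
  fix m
  have "(of_nat (m + d) :: complex) \<noteq> 0"
    using \<open>0 < d\<close> by (simp only: of_nat_eq_0_iff)
  then have "Khat_coeff a (Suc m) * (t ^ m / (of_nat (m + d) * fact m)) =
      a (Suc m) * t ^ m * (of_nat (Suc m) / of_nat (m + d))"
    by (simp add: Khat_coeff_def del: of_nat_Suc of_nat_add)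
  then have "norm (Khat_coeff a (Suc m) * (t ^ m / (of_nat (m + d) * fact m))) =
      norm (a (Suc m) * t ^ m) * cmod (of_nat (Suc m) / of_nat (m + d))"
    by (metis norm_mult)
  moreover have "cmod (of_nat (Suc m) / of_nat (m + d)) \<le> 1"
    using \<open>0 < d\<close> by (simp add: norm_divide del: of_nat_Suc of_nat_add)
  ultimately show "norm (Khat_coeff a (Suc m) * (t ^ m / (of_nat (m + d) * fact m))) \<le> norm (a (Suc m) * t ^ m)"
    by (metis mult_left_le norm_ge_zero)
qed

lemma canonical_kernel_eq_Khat_Kperp_series:
  fixes z w :: "complex^'d"
  assumes a: "powser_converges_on_disc a" and b: "powser_converges_on_disc b"
    and t: "cmod (cinner z w) < 1"
  defines "\<alpha> \<equiv> Khat_coeff a" and "\<beta> \<equiv> Kperp_coeff CARD('d) a b"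
  shows "summable (\<lambda>j. cscale (\<alpha> j) (Khat j z w)) \<and>
    summable (\<lambda>j. cscale (\<beta> (Suc j)) (Kperp (Suc j) z w)) \<and>
    canonical_kernel (\<lambda>t. \<Sum>n. a n * t ^ n) (\<lambda>t. \<Sum>n. b n * t ^ n) z w =
      (\<Sum>j. cscale (\<alpha> j) (Khat j z w)) + (\<Sum>j. cscale (\<beta> (Suc j)) (Kperp (Suc j) z w))"
proof -
  define t M where "t = cinner z w" and "M = outer z w"
  define N where "N m = (of_nat (m + CARD('d)) :: complex)" for m
  define c where "c m = t ^ m / (N m * fact m)" for m
  define p where "p j = (case j of 0 \<Rightarrow> 0 | Suc m \<Rightarrow> \<alpha> (Suc m) * c m)" for j
  have "N m \<noteq> 0" for m
    unfolding N_def by (simp only: of_nat_eq_0_iff) simp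
  have Kperp: "Kperp (Suc m) z w = cscale (c m) M" for m
    by (simp only: Kperp_Suc c_def N_def t_def M_def)
  have Khat_term: "cscale (\<alpha> j) (Khat j z w) = cscale (a j * t ^ j) (mat 1) - cscale (p j) M" for j
  proof (cases j)
    case 0
    then show ?thesis
      by (simp add: Khat_def \<alpha>_def Khat_coeff_def p_def)
  next
    case (Suc m)
    then have "Khat j z w = cscale (t ^ j / fact j) (mat 1) - cscale (c m) M"
      using Khat_add_Kperp[of j z w] by (simp add: Kperp t_def eq_diff_eq)
    then show ?thesis
      by (simp add: Suc \<alpha>_def Khat_coeff_def p_def cscale_diff_right cscale_cscale del: fact_Suc)
  qed
  have "\<beta> (Suc m) = \<alpha> (Suc m) + b m * N m * fact m" for m
    by (simp add: \<beta>_def \<alpha>_def Khat_coeff_def Kperp_coeff_def N_def)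
  then have "\<beta> (Suc m) * c m = p (Suc m) + b m * t ^ m" for m
    using \<open>N m \<noteq> 0\<close> by (simp add: p_def c_def field_simps)
  then have Kperp_term: "cscale (\<beta> (Suc m)) (Kperp (Suc m) z w) = cscale (p (Suc m) + b m * t ^ m) M" for m
    by (simp add: Kperp cscale_cscale)
  have "cmod t < 1"
    using t by (simp add: t_def)
  have sum_a: "summable (\<lambda>j. a j * t ^ j)" and sum_b: "summable (\<lambda>j. b j * t ^ j)"
    using a b \<open>cmod t < 1\<close> by (simp_all add: powser_converges_on_disc_def)
  have "summable (\<lambda>m. p (Suc m))"
    using summable_Khat_coeff_Kperp_factor[OF a \<open>cmod t < 1\<close>, of "CARD('d)"]
    by (simp add: p_def \<alpha>_def c_def N_def)
  moreover have "p 0 = 0"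
    by (simp add: p_def)
  ultimately have sum_p: "summable p" and sum_p_Suc: "(\<Sum>m. p (Suc m)) = suminf p"
    by (simp_all add: summable_Suc_iff suminf_split_head)
  have "(\<lambda>j. cscale (\<alpha> j) (Khat j z w)) sums
      (cscale (\<Sum>j. a j * t ^ j) (mat 1) - cscale (suminf p) M)"
    unfolding Khat_term by (intro sums_diff sums_cscale_left sum_a sum_p)
  moreover have "(\<lambda>m. cscale (\<beta> (Suc m)) (Kperp (Suc m) z w)) sums
      cscale (suminf p + (\<Sum>m. b m * t ^ m)) M"
    using sums_cscale_left[OF summable_add[OF \<open>summable (\<lambda>m. p (Suc m))\<close> sum_b], of M]
      suminf_add[OF \<open>summable (\<lambda>m. p (Suc m))\<close> sum_b] sum_p_Suc
    unfolding Kperp_term by simp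
  ultimately show ?thesis
    by (auto simp: sums_iff canonical_kernel_def cscale_add_left t_def M_def)
qed

theorem theorem3p10:
  fixes K :: "complex ^ 'd \<Rightarrow> complex ^ 'd \<Rightarrow> complex ^ 'd ^ 'd"
  assumes "sesqui_analytic K"
    and "hermitian_kernel K"
    and "quasi_invariant_id K"
  shows "\<exists>(\<alpha>::nat \<Rightarrow> complex) (\<beta>::nat \<Rightarrow> complex).
           \<forall>z\<in>ball 0 1. \<forall>w\<in>ball 0 1.
             summable (\<lambda>j. cscale (\<alpha> j) (Khat j z w)) \<and>
             summable (\<lambda>j. cscale (\<beta> (Suc j)) (Kperp (Suc j) z w)) \<and>
             K z w = (\<Sum>j. cscale (\<alpha> j) (Khat j z w)) + (\<Sum>j. cscale (\<beta> (Suc j)) (Kperp (Suc j) z w))"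
proof -
  interpret quasi_invariant_kernel K
    using assms by unfold_locales
  obtain a b where a: "powser_converges_on_disc a" and b: "powser_converges_on_disc b"
    and K: "\<And>z w. z \<in> ball 0 1 \<Longrightarrow> w \<in> ball 0 1 \<Longrightarrow>
      K z w = canonical_kernel (\<lambda>t. \<Sum>n. a n * t ^ n) (\<lambda>t. \<Sum>n. b n * t ^ n) z w"
    by (rule K_eq_canonical_kernel_powser) blast
  show ?thesis
  proof (intro exI ballI)
    fix z w :: "complex^'d"
    assume "z \<in> ball 0 1" "w \<in> ball 0 1"
    with canonical_kernel_eq_Khat_Kperp_series[OF a b cinner_in_unit_disc[OF this]]
    show "summable (\<lambda>j. cscale (Khat_coeff a j) (Khat j z w)) \<and>
      summable (\<lambda>j. cscale (Kperp_coeff CARD('d) a b (Suc j)) (Kperp (Suc j) z w)) \<and>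
      K z w = (\<Sum>j. cscale (Khat_coeff a j) (Khat j z w)) +
        (\<Sum>j. cscale (Kperp_coeff CARD('d) a b (Suc j)) (Kperp (Suc j) z w))"
      by (simp add: K)
  qed
qed

end
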